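(* Let $E_3=(S^*,V_1^*,I_1^*,I_2^* )$ be an endemic equilibrium of the model with all components positive. Define the Jacobian entries (all partial derivatives of $F_1$ at $(S^*,I_1^* )$ and of $F_2$ at $(S^*,I_2^* )$): - $C_{11}=-\frac{\partial F_1}{\partial S}-\frac{\partial F_2}{\partial S}-\lambda$; - $C_{13}=-\frac{\partial F_1}{\partial I_1}$ and $C_{14}=-\frac{\partial F_2}{\partial I_2}$; - $C_{22}=-\mu-kI_2^*$ and $C_{24}=-kV_1^*$; - $C_{31}=\frac{\partial F_1}{\partial S}$ and $C_{33}=\frac{\partial F_1}{\partial I_1}-\alpha_1$; - $C_{41}=\frac{\partial F_2}{\partial S}$, $C_{42}=kI_2^*$ and $C_{44}=\frac{\partial F_2}{\partial I_2}+kV_1^*-\alpha_2$. Let - $c_1=-C_{44}-C_{33}-C_{22}-C_{11}$; - $c_2=-C_{41}C_{14}-C_{42}C_{24}+C_{44}C_{33}+C_{44}C_{22}+C_{44}C_{11}-C_{31}C_{13}+C_{33}C_{22}+C_{33}C_{11}+C_{22}C_{11}$; - $c_3=-rC_{42}C_{14}+C_{41}C_{14}C_{33}+C_{41}C_{14}C_{22}+C_{42}C_{24}C_{33}+C_{42}C_{24}C_{11}+C_{44}C_{31}C_{13}-C_{44}C_{33}C_{22}-C_{44}C_{33}C_{11}-C_{44}C_{22}C_{11}+C_{31}C_{13}C_{22}-C_{33}C_{22}C_{11}$; - $c_4=rC_{42}C_{14}C_{33}-C_{41}C_{14}C_{33}C_{22}+C_{42}C_{24}C_{31}C_{13}-C_{42}C_{24}C_{33}C_{11}-C_{44}C_{31}C_{13}C_{22}+C_{44}C_{33}C_{22}C_{11}$.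 If $c_1c_2-c_3>0$ and $c_1c_2c_3-c_3^2-c_1^2c_4>0$, then $E_3$ is locally asymptotically stable.
   Context: The model is $\dot S=\Lambda-F_1(S,I_1)-F_2(S,I_2)-\lambda S$, $\dot V_1=rS-(\mu+kI_2)V_1$, $\dot I_1=F_1(S,I_1)-\alpha_1I_1$, $\dot I_2=F_2(S,I_2)+kI_2V_1-\alpha_2I_2$ on $\mathbb{R}^4_+$. The constants $\Lambda,\mu,r,k,\gamma_1,\gamma_2>0$ and $v_1,v_2\ge0$; $\lambda=r+\mu$ and $\alpha_i=\gamma_i+v_i+\mu$. For $i=1,2$ the incidence functions satisfy: - (H1) $F_i(S,I_i)=I_if_i(S,I_i)$ with $F_i,f_i\in C^2(\mathbb{R}^2_+,\mathbb{R}_+)$ and $F_i(0,I_i)=F_i(S,0)=0$; - (H2) $\partial f_i/\partial S>0$ and $\partial f_i/\partial I_i\le0$; - (H3) $\lim_{I_i\to0^+}F_i(S,I_i)/I_i$ exists and is positive for $S>0$. *)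

theory Defs
  imports "HOL-Analysis.Analysis"
begin

definition Rplus2 :: "(real \<times> real) set" where
  "Rplus2 = {(s, i). 0 \<le> s \<and> 0 \<le> i}"

definition Rplus4 :: "(real \<times> real \<times> real \<times> real) set" where
  "Rplus4 = {(s, v, i1, i2). 0 \<le> s \<and> 0 \<le> v \<and> 0 \<le> i1 \<and> 0 \<le> i2}"

definition C2_on :: "('a::real_normed_vector) set \<Rightarrow> ('a \<Rightarrow> real) \<Rightarrow> bool" where
  "C2_on S g \<longleftrightarrow> (\<exists>Dg :: 'a \<Rightarrow> ('a \<Rightarrow>\<^sub>L real). \<exists>D2g :: 'a \<Rightarrow> ('a \<Rightarrow>\<^sub>L ('a \<Rightarrow>\<^sub>L real)).
      (\<forall>x\<in>S. (g has_derivative blinfun_apply (Dg x)) (at x within S)) \<and>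
      (\<forall>x\<in>S. (Dg has_derivative blinfun_apply (D2g x)) (at x within S)) \<and>
      continuous_on S D2g)"

definition pd1 :: "(real \<Rightarrow> real \<Rightarrow> real) \<Rightarrow> real \<Rightarrow> real \<Rightarrow> real" where
  "pd1 G s i = deriv (\<lambda>x. G x i) s"

definition pd2 :: "(real \<Rightarrow> real \<Rightarrow> real) \<Rightarrow> real \<Rightarrow> real \<Rightarrow> real" where
  "pd2 G s i = deriv (\<lambda>y. G s y) i"

definition incidence_ok :: "(real \<Rightarrow> real \<Rightarrow> real) \<Rightarrow> (real \<Rightarrow> real \<Rightarrow> real) \<Rightarrow> bool" where
  "incidence_ok F f \<longleftrightarrow>
     \<comment> \<open>(H1)\<close>
     (\<forall>s i. 0 \<le> s \<longrightarrow> 0 \<le> i \<longrightarrow> F s i = i * f s i) \<and>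
     C2_on Rplus2 (\<lambda>(s, i). F s i) \<and> C2_on Rplus2 (\<lambda>(s, i). f s i) \<and>
     (\<forall>s i. 0 \<le> s \<longrightarrow> 0 \<le> i \<longrightarrow> 0 \<le> F s i \<and> 0 \<le> f s i) \<and>
     (\<forall>i. 0 \<le> i \<longrightarrow> F 0 i = 0) \<and> (\<forall>s. 0 \<le> s \<longrightarrow> F s 0 = 0) \<and>
     \<comment> \<open>(H2)\<close>
     (\<forall>s i. 0 \<le> s \<longrightarrow> 0 \<le> i \<longrightarrow>
        (\<exists>d>0. ((\<lambda>x. f x i) has_real_derivative d) (at s within {0..})) \<and>
        (\<exists>d\<le>0. ((\<lambda>y. f s y) has_real_derivative d) (at i within {0..}))) \<and>
     \<comment> \<open>(H3)\<close>
     (\<forall>s>0. \<exists>L>0. ((\<lambda>y. F s y / y) \<longlongrightarrow> L) (at_right 0))"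

text \<open>Right-hand side of the model, with lambda = r + mu and alpha_i = gamma_i + v_i + mu.\<close>
definition model_rhs ::
  "real \<Rightarrow> real \<Rightarrow> real \<Rightarrow> real \<Rightarrow> real \<Rightarrow> real \<Rightarrow> real \<Rightarrow> real \<Rightarrow>
   (real \<Rightarrow> real \<Rightarrow> real) \<Rightarrow> (real \<Rightarrow> real \<Rightarrow> real) \<Rightarrow>
   real \<times> real \<times> real \<times> real \<Rightarrow> real \<times> real \<times> real \<times> real" where
  "model_rhs Lam mu r k gamma1 gamma2 v1 v2 F1 F2 =
     (\<lambda>(s, v, i1, i2).
       (Lam - F1 s i1 - F2 s i2 - (r + mu) * s,
        r * s - (mu + k * i2) * v,
        F1 s i1 - (gamma1 + v1 + mu) * i1,
        F2 s i2 + k * i2 * v - (gamma2 + v2 + mu) * i2))"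

definition ode_sol :: "('a::real_normed_vector \<Rightarrow> 'a) \<Rightarrow> 'a set \<Rightarrow> real set \<Rightarrow> (real \<Rightarrow> 'a) \<Rightarrow> bool" where
  "ode_sol g X J x \<longleftrightarrow>
     (\<forall>t\<in>J. (x has_vector_derivative g (x t)) (at t within J) \<and> x t \<in> X)"

definition loc_asym_stable :: "('a::real_normed_vector \<Rightarrow> 'a) \<Rightarrow> 'a set \<Rightarrow> 'a \<Rightarrow> bool" where
  "loc_asym_stable g X e \<longleftrightarrow>
     e \<in> X \<and> g e = 0 \<and>
     (\<forall>\<epsilon>>0. \<exists>\<delta>>0. \<forall>x T. ode_sol g X {0..<T} x \<and> dist (x 0) e < \<delta> \<longrightarrow>
          (\<forall>t\<in>{0..<T}. dist (x t) e < \<epsilon>)) \<and>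
     (\<exists>\<eta>>0.
        (\<forall>x0\<in>X. dist x0 e < \<eta> \<longrightarrow> (\<exists>x. ode_sol g X {0..} x \<and> x 0 = x0)) \<and>
        (\<forall>x. ode_sol g X {0..} x \<and> dist (x 0) e < \<eta> \<longrightarrow> (x \<longlongrightarrow> e) at_top))"

end

theory Submission
  imports Defs
begin

text \<open>
  Lyapunov's indirect method with an explicit quadratic Lyapunov function. The Jacobian \<open>J\<close> of
  the model at \<open>E\<^sub>3\<close> has characteristic polynomial \<open>X\<^sup>4 + c\<^sub>1X\<^sup>3 + c\<^sub>2X\<^sup>2 + c\<^sub>3X + c\<^sub>4\<close>. The sign
  conditions (H1)--(H2) and the equilibrium equations give \<open>c\<^sub>1, c\<^sub>4 > 0\<close>, and together with the two
  Routh--Hurwitz inequalities this makes positive definite a quadratic form \<open>B\<close> built from the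
  Krylov vectors \<open>z, Jz, J\<^sup>2z, J\<^sup>3z\<close> for which \<open>B(z, Jz) = -\<Delta>\<^sub>3 |Jz|\<^sup>2\<close>; as \<open>J\<close> is invertible,
  this is at most \<open>-\<gamma> |z|\<^sup>2\<close>. Since the right-hand side is differentiable at \<open>E\<^sub>3\<close> with derivative
  \<open>J\<close>, \<open>V(y) = B(y - E\<^sub>3, y - E\<^sub>3)\<close> decays exponentially along solutions near \<open>E\<^sub>3\<close>, which gives
  stability and attractivity. Solutions starting near \<open>E\<^sub>3\<close> exist for all time because the
  right-hand side is Lipschitz near \<open>E\<^sub>3\<close> and they never leave the region where \<open>V\<close> decreases.
\<close>

section \<open>Global solutions of bounded Lipschitz equations\<close>

lemma has_integral_exp_scaled:
  fixes c u :: real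
  assumes "c \<noteq> 0" "u \<ge> 0"
  shows "((\<lambda>s. exp (c * s)) has_integral (exp (c * u) - 1) / c) {0..u}"
proof -
  have "((\<lambda>s. exp (c * s)) has_integral exp (c * u) / c - exp (c * 0) / c) {0..u}"
  proof (rule fundamental_theorem_of_calculus[OF assms(2), of "\<lambda>s. exp (c * s) / c"])
    fix s :: real
    have "((\<lambda>s. exp (c * s) / c) has_real_derivative exp (c * s)) (at s)"
      using assms(1) by (auto intro!: derivative_eq_intros)
    then show "((\<lambda>s. exp (c * s) / c) has_vector_derivative exp (c * s)) (at s within {0..u})"
      by (simp add: has_real_derivative_iff_has_vector_derivative has_vector_derivative_at_within)
  qed
  then show ?thesis
    by (simp add: diff_divide_distrib)
qed

lemma mult_exp_neg_le:
  fixes c u :: real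
  assumes "c > 0" "u \<ge> 0"
  shows "u * exp (- c * u) \<le> 1 / c"
proof -
  have "c * u \<le> exp (c * u)"
    using exp_ge_add_one_self[of "c * u"] by linarith
  then show ?thesis
    using assms by (simp add: exp_minus field_simps)
qed

lemma integral_equation_has_vector_derivative:
  fixes x :: "real \<Rightarrow> 'a::banach"
  assumes cont: "continuous_on {0..} (\<lambda>s. G (x s))"
    and x_eq: "\<And>t. t \<ge> 0 \<Longrightarrow> x t = x0 + integral {0..t} (\<lambda>s. G (x s))" and "t \<ge> 0"
  shows "(x has_vector_derivative G (x t)) (at t within {0..})"
proof -
  have "((\<lambda>u. x0 + integral {0..u} (\<lambda>s. G (x s))) has_vector_derivative G (x t)) (at t within {0..t+1})"
    using \<open>t \<ge> 0\<close>
    by (auto intro!: derivative_eq_intros integral_has_vector_derivative continuous_on_subset[OF cont])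
  then have "(x has_vector_derivative G (x t)) (at t within {0..t+1})"
    by (rule has_vector_derivative_transform_within[of _ _ _ _ 1]) (use \<open>t \<ge> 0\<close> x_eq in auto)
  moreover have "at t within {0..t+1} = at t within {0..}"
    by (rule at_within_nhd[where S="{..<t+1}"]) auto
  ultimately show ?thesis
    by simp
qed

lemma continuous_on_integral_from_0:
  fixes H :: "real \<Rightarrow> 'a::banach"
  assumes "continuous_on UNIV H"
  shows "continuous_on UNIV (\<lambda>t. integral {0..max t 0} H)"
proof (rule continuous_at_imp_continuous_on, intro ballI)
  fix t :: real
  define b where "b = max t 0 + 1"
  have "continuous_on {0..b} (\<lambda>u. integral {0..u} H)"
    by (intro indefinite_integral_continuous_1 integrable_continuous_interval
        continuous_on_subset[OF assms]) auto
  then have "continuous_on {..<b} (\<lambda>t. integral {0..max t 0} H)"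
    by (rule continuous_on_compose2) (auto intro!: continuous_intros simp: b_def)
  then show "isCont (\<lambda>t. integral {0..max t 0} H) t"
    by (rule continuous_on_interior) (simp add: b_def interior_open)
qed

text \<open>
  The Picard operator conjugated by the weight \<open>e\<^sup>-\<^sup>c\<^sup>t\<close> and frozen for \<open>t \<le> 0\<close>: a fixed point \<open>y\<close>
  gives the solution \<open>x t = e\<^sup>c\<^sup>t y t\<close> for \<open>t \<ge> 0\<close>, and for \<open>c \<ge> 2L\<close> the weight makes the operator
  a contraction of the sup norm on the whole half-line.
\<close>

definition weighted_picard :: "('a::banach \<Rightarrow> 'a) \<Rightarrow> real \<Rightarrow> 'a \<Rightarrow> (real \<Rightarrow>\<^sub>C 'a) \<Rightarrow> real \<Rightarrow> 'a" where
  "weighted_picard G c x0 y t = exp (- c * max t 0) *\<^sub>R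
     (x0 + integral {0..max t 0} (\<lambda>s. G (exp (c * s) *\<^sub>R apply_bcontfun y s)))"

lemma weighted_picard_integrand_continuous:
  fixes y :: "real \<Rightarrow>\<^sub>C 'a::banach"
  assumes "continuous_on UNIV G"
  shows "continuous_on S (\<lambda>s. G (exp (c * s) *\<^sub>R apply_bcontfun y s))"
  by (rule continuous_on_compose2[OF assms]) (auto intro!: continuous_intros)

lemma norm_weighted_picard_le:
  fixes G :: "'a::banach \<Rightarrow> 'a"
  assumes cont: "continuous_on UNIV G" and bound: "\<And>y. norm (G y) \<le> M" and "c > 0"
  shows "norm (weighted_picard G c x0 y t) \<le> norm x0 + M / c"
proof -
  define u where "u = max t 0"
  define H where "H = (\<lambda>s. G (exp (c * s) *\<^sub>R apply_bcontfun y s))"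
  have u: "u \<ge> 0"
    by (simp add: u_def)
  have M: "M \<ge> 0"
    using bound[of x0] norm_ge_zero order_trans by blast
  have "norm (integral {0..u} H) \<le> integral {0..u} (\<lambda>_. M)"
    unfolding H_def
    by (intro integral_norm_bound_integral integrable_continuous_interval
        weighted_picard_integrand_continuous cont) (auto simp: bound)
  also have "\<dots> = M * u"
    using u by simp
  finally have "norm (x0 + integral {0..u} H) \<le> norm x0 + M * u"
    by (meson add_left_mono norm_triangle_ineq order_trans)
  moreover have "weighted_picard G c x0 y t = exp (- c * u) *\<^sub>R (x0 + integral {0..u} H)"
    by (simp add: weighted_picard_def H_def u_def)
  ultimately have "norm (weighted_picard G c x0 y t) \<le> exp (- c * u) * (norm x0 + M * u)"
    by (simp add: mult_left_mono)
  also have "\<dots> = exp (- c * u) * norm x0 + M * (u * exp (- c * u))"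
    by (simp add: algebra_simps)
  also have "\<dots> \<le> norm x0 + M * (1 / c)"
    using \<open>c > 0\<close> u M by (intro add_mono mult_left_mono mult_exp_neg_le) (auto simp: mult_left_le_one_le)
  finally show ?thesis
    by simp
qed

lemma weighted_picard_in_bcontfun:
  fixes G :: "'a::banach \<Rightarrow> 'a"
  assumes cont: "continuous_on UNIV G" and bound: "\<And>y. norm (G y) \<le> M" and "c > 0"
  shows "weighted_picard G c x0 y \<in> bcontfun"
proof -
  have "continuous_on UNIV (weighted_picard G c x0 y)"
    unfolding weighted_picard_def
    by (intro continuous_intros continuous_on_integral_from_0 weighted_picard_integrand_continuous cont)
  moreover have "bounded (range (weighted_picard G c x0 y))"
    unfolding bounded_iff using norm_weighted_picard_le[OF assms] by blast
  ultimately show ?thesis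
    by (simp add: bcontfun_def)
qed

lemma weighted_picard_contraction:
  fixes G :: "'a::banach \<Rightarrow> 'a"
  assumes lip: "L-lipschitz_on UNIV G" and "c > 0" "2 * L \<le> c"
  shows "dist (weighted_picard G c x0 y1 t) (weighted_picard G c x0 y2 t) \<le> 1/2 * dist y1 y2"
proof -
  define u where "u = max t 0"
  define D where "D = dist y1 y2"
  define H where "H y s = G (exp (c * s) *\<^sub>R apply_bcontfun y s)" for y s
  have L: "L \<ge> 0" and D: "D \<ge> 0" and u: "u \<ge> 0"
    using lipschitz_on_nonneg[OF lip] by (auto simp: D_def u_def)
  have int: "H y integrable_on {a..b}" for y a b
    unfolding H_def
    by (intro integrable_continuous_interval weighted_picard_integrand_continuous
        lipschitz_on_continuous_on[OF lip])
  have H_diff: "norm (H y1 s - H y2 s) \<le> L * D * exp (c * s)" for s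
  proof -
    have "norm (H y1 s - H y2 s) \<le> L * dist (exp (c * s) *\<^sub>R apply_bcontfun y1 s) (exp (c * s) *\<^sub>R apply_bcontfun y2 s)"
      unfolding H_def dist_norm[symmetric] by (rule lipschitz_onD[OF lip]) auto
    also have "\<dots> = L * exp (c * s) * dist (apply_bcontfun y1 s) (apply_bcontfun y2 s)"
      by (simp add: dist_norm scaleR_diff_right[symmetric])
    also have "\<dots> \<le> L * exp (c * s) * D"
      unfolding D_def using L by (intro mult_left_mono dist_bounded) auto
    finally show ?thesis
      by (simp add: algebra_simps)
  qed
  have ftc: "((\<lambda>s. L * D * exp (c * s)) has_integral L * D * ((exp (c * u) - 1) / c)) {0..u}"
    using has_integral_exp_scaled[of c u] \<open>c > 0\<close> u by (intro has_integral_mult_right) auto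
  have "exp (- c * u) * norm (integral {0..u} (\<lambda>s. H y1 s - H y2 s))
      \<le> exp (- c * u) * (L * D * ((exp (c * u) - 1) / c))"
    using H_diff
    by (intro mult_left_mono integral_norm_bound_integral[OF _ has_integral_integrable[OF ftc],
          unfolded integral_unique[OF ftc]] integrable_diff int) auto
  also have "\<dots> = L * D * (1 - exp (- c * u)) / c"
    using \<open>c > 0\<close> by (simp add: field_simps exp_minus)
  also have "\<dots> \<le> L * D / c"
    using L D \<open>c > 0\<close> by (simp add: divide_right_mono mult_left_le)
  also have "\<dots> \<le> D / 2"
    using L D \<open>c > 0\<close> \<open>2 * L \<le> c\<close> by (simp add: field_simps mult_left_mono)
  finally show ?thesis
    unfolding weighted_picard_def H_def[symmetric] u_def[symmetric] D_def dist_norm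
    by (simp add: integral_diff int scaleR_diff_right[symmetric])
qed

lemma bounded_lipschitz_ode_solution:
  fixes G :: "'a::banach \<Rightarrow> 'a"
  assumes lip: "L-lipschitz_on UNIV G" and bound: "\<And>y. norm (G y) \<le> M"
  obtains x where "x 0 = x0" "\<And>t. t \<ge> 0 \<Longrightarrow> (x has_vector_derivative G (x t)) (at t within {0..})"
proof -
  define c where "c = 2 * L + 1"
  have c: "c > 0" "2 * L \<le> c"
    using lipschitz_on_nonneg[OF lip] by (auto simp: c_def)
  have cont: "continuous_on UNIV G"
    by (rule lipschitz_on_continuous_on[OF lip])
  define Phi where "Phi y = Bcontfun (weighted_picard G c x0 y)" for y
  have Phi_apply: "apply_bcontfun (Phi y) = weighted_picard G c x0 y" for y
    unfolding Phi_def by (simp add: Bcontfun_inverse weighted_picard_in_bcontfun[OF cont bound c(1)])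
  have "dist (Phi y1) (Phi y2) \<le> 1/2 * dist y1 y2" for y1 y2
    by (rule dist_bound) (unfold Phi_apply, rule weighted_picard_contraction[OF lip c])
  then obtain y where y: "Phi y = y"
    using banach_fix_type[of "1/2" Phi] by auto
  define x where "x t = exp (c * t) *\<^sub>R apply_bcontfun y t" for t
  have x_eq: "x t = x0 + integral {0..t} (\<lambda>s. G (x s))" if "t \<ge> 0" for t
  proof -
    have "apply_bcontfun y t = exp (- c * t) *\<^sub>R (x0 + integral {0..t} (\<lambda>s. G (x s)))"
      using that arg_cong[OF y, of "\<lambda>y. apply_bcontfun y t"]
      by (simp add: Phi_apply weighted_picard_def x_def)
    then show ?thesis
      by (simp add: x_def exp_add[symmetric])
  qed
  have cont_Gx: "continuous_on {0..} (\<lambda>s. G (x s))"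
    unfolding x_def by (rule weighted_picard_integrand_continuous[OF cont])
  show thesis
  proof (rule that)
    show "x 0 = x0"
      using x_eq[of 0] by simp
    show "(x has_vector_derivative G (x t)) (at t within {0..})" if "t \<ge> 0" for t
      by (rule integral_equation_has_vector_derivative[OF cont_Gx x_eq that])
  qed
qed

lemma lipschitz_extension_from_cball:
  fixes g :: "'a::euclidean_space \<Rightarrow> 'b::real_normed_vector"
  assumes lip: "L-lipschitz_on (cball e \<rho>) g" and "\<rho> \<ge> 0"
  obtains G where "L-lipschitz_on UNIV G" "\<And>y. norm (G y) \<le> norm (g e) + L * \<rho>"
    "\<And>y. y \<in> cball e \<rho> \<Longrightarrow> G y = g y"
proof
  define P where "P = closest_point (cball e \<rho>)"
  have proj: "P y \<in> cball e \<rho>" for y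
    using \<open>\<rho> \<ge> 0\<close> unfolding P_def by (intro closest_point_in_set) auto
  have "1-lipschitz_on UNIV P"
    using \<open>\<rho> \<ge> 0\<close> closest_point_lipschitz[of "cball e \<rho>"] unfolding P_def by (intro lipschitz_onI) auto
  moreover have "range P \<subseteq> cball e \<rho>"
    using proj by auto
  ultimately show "L-lipschitz_on UNIV (g \<circ> P)"
    using lipschitz_on_compose[of 1 UNIV P L g] lipschitz_on_subset[OF lip] by auto
  show "norm ((g \<circ> P) y) \<le> norm (g e) + L * \<rho>" for y
  proof -
    have "dist (g (P y)) (g e) \<le> L * dist (P y) e"
      using proj \<open>\<rho> \<ge> 0\<close> by (auto intro!: lipschitz_onD[OF lip])
    also have "\<dots> \<le> L * \<rho>"
      using proj[of y] lipschitz_on_nonneg[OF lip] by (auto intro!: mult_left_mono simp: dist_commute)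
    moreover have "norm (g (P y)) \<le> norm (g e) + dist (g (P y)) (g e)"
      using norm_triangle_sub[of "g (P y)" "g e"] by (simp add: dist_norm)
    ultimately show ?thesis
      by simp
  qed
  show "(g \<circ> P) y = g y" if "y \<in> cball e \<rho>" for y
    using that by (simp add: P_def closest_point_self)
qed

section \<open>Quadratic Lyapunov functions and linearized stability\<close>

lemma ode_sol_continuous_on: "ode_sol g X J x \<Longrightarrow> continuous_on J x"
  unfolding ode_sol_def continuous_on_eq_continuous_within
  by (auto intro: has_vector_derivative_continuous)

lemma ode_sol_subset: "ode_sol g X J x \<Longrightarrow> J' \<subseteq> J \<Longrightarrow> ode_sol g X J' x"
  unfolding ode_sol_def by (auto intro: has_vector_derivative_within_subset)

lemma bounded_bilinear_diag_has_real_derivative: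
  fixes x :: "real \<Rightarrow> 'a::real_normed_vector"
  assumes "bounded_bilinear B" and commute: "\<And>z h. B z h = B h z"
    and "(x has_vector_derivative v) (at t within S)"
  shows "((\<lambda>t. B (x t - e) (x t - e)) has_real_derivative 2 * B (x t - e) v) (at t within S)"
proof -
  have d: "((\<lambda>t. x t - e) has_vector_derivative v) (at t within S)"
    using has_vector_derivative_diff[OF assms(3) has_vector_derivative_const[of e]] by simp
  have "((\<lambda>t. B (x t - e) (x t - e)) has_vector_derivative B (x t - e) v + B v (x t - e)) (at t within S)"
    by (rule bounded_bilinear.has_vector_derivative[OF assms(1) d d])
  then show ?thesis
    by (simp add: has_real_derivative_iff_has_vector_derivative commute[of v])
qed

lemma lyapunov_decrease_near_equilibrium:
  assumes "g e = 0" and deriv: "(g has_derivative J) (at e)" and "bounded_bilinear B"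
    and along: "\<And>z. B z (J z) \<le> - \<gamma> * (norm z)\<^sup>2" and "\<gamma> > 0"
  obtains \<rho> where "\<rho> > 0" "\<And>y. norm (y - e) < \<rho> \<Longrightarrow> B (y - e) (g y) \<le> - \<gamma> / 2 * (norm (y - e))\<^sup>2"
proof -
  obtain K where K: "K > 0" "\<And>a b. norm (B a b) \<le> norm a * norm b * K"
    using bounded_bilinear.pos_bounded[OF assms(3)] by blast
  have "\<gamma> / (2 * K) > 0"
    using K \<open>\<gamma> > 0\<close> by simp
  then obtain \<rho> where "\<rho> > 0"
    and rem: "\<And>y. norm (y - e) < \<rho> \<Longrightarrow> norm (g y - J (y - e)) \<le> \<gamma> / (2 * K) * norm (y - e)"
    using deriv \<open>g e = 0\<close> unfolding has_derivative_at_alt by force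
  have "B (y - e) (g y) \<le> - \<gamma> / 2 * (norm (y - e))\<^sup>2" if "norm (y - e) < \<rho>" for y
  proof -
    define z where "z = y - e"
    have "B z (g y) = B z (J z) + B z (g y - J z)"
      by (simp add: bounded_bilinear.diff_right[OF assms(3)])
    also have "B z (g y - J z) \<le> norm z * norm (g y - J z) * K"
      using K(2)[of z "g y - J z"] by simp
    also have "\<dots> \<le> norm z * (\<gamma> / (2 * K) * norm z) * K"
      using rem[OF that] K(1) by (intro mult_right_mono mult_left_mono) (auto simp: z_def)
    also have "norm z * (\<gamma> / (2 * K) * norm z) * K = \<gamma> / 2 * (norm z)\<^sup>2"
      using K(1) by (simp add: power2_eq_square)
    finally show ?thesis
      using along[of z] by (simp add: z_def)
  qed
  with \<open>\<rho> > 0\<close> show thesis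
    by (rule that)
qed

lemma first_exit_time:
  fixes \<phi> :: "real \<Rightarrow> real"
  assumes cont: "continuous_on {0..t} \<phi>" and "0 \<le> t" "\<phi> 0 < \<epsilon>" "\<epsilon> \<le> \<phi> t"
  obtains t0 where "0 < t0" "t0 \<le> t" "\<epsilon> \<le> \<phi> t0" "\<And>s. 0 \<le> s \<Longrightarrow> s < t0 \<Longrightarrow> \<phi> s < \<epsilon>"
proof -
  define S where "S = {0..t} \<inter> \<phi> -` {\<epsilon>..}"
  have "closed S"
    unfolding S_def by (intro continuous_closed_preimage cont) auto
  moreover have "t \<in> S" "bdd_below S"
    using assms by (auto simp: S_def)
  ultimately have "Inf S \<in> S"
    using closed_contains_Inf by blast
  moreover have "\<phi> s < \<epsilon>" if "0 \<le> s" "s < Inf S" for s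
    using cInf_lower[of s S] \<open>bdd_below S\<close> \<open>t \<in> S\<close> cInf_lower[of t S] that by (force simp: S_def)
  ultimately show thesis
    using that[of "Inf S"] \<open>\<phi> 0 < \<epsilon>\<close> by (force simp: S_def)
qed

locale quadratic_lyapunov =
  fixes g :: "'a::euclidean_space \<Rightarrow> 'a" and e :: 'a and B :: "'a \<Rightarrow> 'a \<Rightarrow> real"
    and m K \<gamma> \<rho> :: real
  assumes bounded_bilinear: "bounded_bilinear B"
    and commute: "\<And>z h. B z h = B h z"
    and m_pos: "m > 0" and lower: "\<And>z. m * (norm z)\<^sup>2 \<le> B z z"
    and upper: "\<And>z. B z z \<le> K * (norm z)\<^sup>2"
    and \<rho>_pos: "\<rho> > 0" and \<gamma>_pos: "\<gamma> > 0"
    and decrease: "\<And>y. norm (y - e) < \<rho> \<Longrightarrow> B (y - e) (g y) \<le> - \<gamma> * (norm (y - e))\<^sup>2"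
begin

lemma K_pos: "K > 0"
proof -
  obtain b :: 'a where "b \<in> Basis"
    using nonempty_Basis by blast
  then show ?thesis
    using lower[of b] upper[of b] m_pos by simp
qed

lemma decrease_nonpos:
  assumes "norm (y - e) < \<rho>"
  shows "B (y - e) (g y) \<le> 0"
proof -
  have "0 \<le> \<gamma> * (norm (y - e))\<^sup>2"
    using \<gamma>_pos by simp
  with decrease[OF assms] show ?thesis
    by linarith
qed

lemma initial_bound:
  assumes "norm (x0 - e) < \<epsilon> * sqrt (m / K)"
  shows "K * (norm (x0 - e))\<^sup>2 < m * \<epsilon>\<^sup>2"
proof -
  have "(norm (x0 - e))\<^sup>2 < (\<epsilon> * sqrt (m / K))\<^sup>2"
    using assms by (intro power_strict_mono) auto
  also have "\<dots> = \<epsilon>\<^sup>2 * m / K"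
    using m_pos K_pos by (simp add: power_mult_distrib)
  finally show ?thesis
    using K_pos by (simp add: field_simps)
qed

lemma stays_in_ball:
  assumes cont: "continuous_on {0..<T} x"
    and der: "\<And>t. t \<in> {0..<T} \<Longrightarrow> norm (x t - e) < \<rho> \<Longrightarrow>
      (x has_vector_derivative g (x t)) (at t within {0..<T})"
    and \<epsilon>: "0 < \<epsilon>" "\<epsilon> \<le> \<rho>" and init: "K * (norm (x 0 - e))\<^sup>2 < m * \<epsilon>\<^sup>2"
    and t: "t \<in> {0..<T}"
  shows "norm (x t - e) < \<epsilon>"
proof (rule ccontr)
  assume "\<not> norm (x t - e) < \<epsilon>"
  have "m * (norm (x 0 - e))\<^sup>2 < m * \<epsilon>\<^sup>2"
    using lower[of "x 0 - e"] upper[of "x 0 - e"] init by linarith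
  then have "norm (x 0 - e) < \<epsilon>"
    using m_pos \<epsilon> by (simp add: power_less_imp_less_base)
  moreover have "continuous_on {0..t} (\<lambda>s. norm (x s - e))"
    using t by (intro continuous_intros continuous_on_subset[OF cont]) auto
  ultimately obtain t0 where "0 < t0" "t0 \<le> t" and outside: "\<epsilon> \<le> norm (x t0 - e)"
    and before: "\<And>s. 0 \<le> s \<Longrightarrow> s < t0 \<Longrightarrow> norm (x s - e) < \<epsilon>"
    using first_exit_time[of t "\<lambda>s. norm (x s - e)" \<epsilon>] t \<open>\<not> norm (x t - e) < \<epsilon>\<close> by auto
  have "B (x t0 - e) (x t0 - e) \<le> B (x 0 - e) (x 0 - e)"
  proof (rule DERIV_nonpos_imp_decreasing_open[of 0 t0 "\<lambda>s. B (x s - e) (x s - e)"])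
    show "continuous_on {0..t0} (\<lambda>s. B (x s - e) (x s - e))"
      using t \<open>t0 \<le> t\<close>
      by (intro bounded_bilinear.continuous_on[OF bounded_bilinear] continuous_intros
          continuous_on_subset[OF cont]) auto
    fix s assume s: "0 < s" "s < t0"
    then have "norm (x s - e) < \<rho>"
      using before[of s] \<epsilon> by linarith
    moreover have "at s within {0..<T} = at s"
      using s \<open>t0 \<le> t\<close> t by (intro at_within_interior) auto
    ultimately have "(x has_vector_derivative g (x s)) (at s)"
      using der[of s] s \<open>t0 \<le> t\<close> t by auto
    then have "((\<lambda>s. B (x s - e) (x s - e)) has_real_derivative 2 * B (x s - e) (g (x s))) (at s)"
      by (rule bounded_bilinear_diag_has_real_derivative[OF bounded_bilinear commute])
    then show "\<exists>y. ((\<lambda>s. B (x s - e) (x s - e)) has_real_derivative y) (at s) \<and> y \<le> 0"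
      using decrease_nonpos[OF \<open>norm (x s - e) < \<rho>\<close>] by auto
  qed (use \<open>0 < t0\<close> in simp)
  moreover have "m * \<epsilon>\<^sup>2 \<le> m * (norm (x t0 - e))\<^sup>2"
    using outside \<epsilon> m_pos by (intro mult_left_mono power_mono) auto
  ultimately show False
    using lower[of "x t0 - e"] upper[of "x 0 - e"] init by linarith
qed

lemma ode_sol_stays_in_ball:
  assumes sol: "ode_sol g X {0..<T} x" and \<epsilon>: "0 < \<epsilon>" "\<epsilon> \<le> \<rho>"
    and init: "norm (x 0 - e) < \<epsilon> * sqrt (m / K)" and t: "t \<in> {0..<T}"
  shows "norm (x t - e) < \<epsilon>"
  using sol by (intro stays_in_ball[OF ode_sol_continuous_on[OF sol] _ \<epsilon> initial_bound[OF init] t])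
    (simp add: ode_sol_def)

lemma decrease_rate:
  assumes "norm (y - e) < \<rho>"
  shows "2 * B (y - e) (g y) + 2 * \<gamma> / K * B (y - e) (y - e) \<le> 0"
proof -
  have "2 * \<gamma> / K * B (y - e) (y - e) \<le> 2 * \<gamma> / K * (K * (norm (y - e))\<^sup>2)"
    using upper[of "y - e"] \<gamma>_pos K_pos by (intro mult_left_mono) auto
  also have "\<dots> = 2 * \<gamma> * (norm (y - e))\<^sup>2"
    using K_pos by simp
  finally show ?thesis
    using decrease[OF assms] by simp
qed

lemma exponential_decay:
  assumes cont: "continuous_on {0..} x"
    and der: "\<And>t. t \<ge> 0 \<Longrightarrow> (x has_vector_derivative g (x t)) (at t within {0..})"
    and in_ball: "\<And>t. t \<ge> 0 \<Longrightarrow> norm (x t - e) < \<rho>"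
    and "t \<ge> 0"
  shows "B (x t - e) (x t - e) \<le> B (x 0 - e) (x 0 - e) * exp (- (2 * \<gamma> / K) * t)"
proof -
  define \<kappa> where "\<kappa> = 2 * \<gamma> / K"
  define V where "V s = B (x s - e) (x s - e)" for s
  have "V t * exp (\<kappa> * t) \<le> V 0 * exp (\<kappa> * 0)"
  proof (rule DERIV_nonpos_imp_decreasing_open[OF \<open>t \<ge> 0\<close>, of "\<lambda>s. V s * exp (\<kappa> * s)"])
    show "continuous_on {0..t} (\<lambda>s. V s * exp (\<kappa> * s))"
      unfolding V_def
      by (intro bounded_bilinear.continuous_on[OF bounded_bilinear] continuous_intros
          continuous_on_subset[OF cont]) auto
    fix s :: real assume "0 < s" "s < t"
    have "at s within {0..} = at s"
      using \<open>0 < s\<close> by (intro at_within_interior) auto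
    then have "(x has_vector_derivative g (x s)) (at s)"
      using der[of s] \<open>0 < s\<close> by simp
    then have "(V has_real_derivative 2 * B (x s - e) (g (x s))) (at s)"
      unfolding V_def by (rule bounded_bilinear_diag_has_real_derivative[OF bounded_bilinear commute])
    then have "((\<lambda>s. V s * exp (\<kappa> * s)) has_real_derivative
        (2 * B (x s - e) (g (x s)) + \<kappa> * V s) * exp (\<kappa> * s)) (at s)"
      by (auto intro!: derivative_eq_intros simp: algebra_simps)
    moreover have "(2 * B (x s - e) (g (x s)) + \<kappa> * V s) * exp (\<kappa> * s) \<le> 0"
      using decrease_rate[OF in_ball[of s]] \<open>0 < s\<close>
      by (simp add: V_def \<kappa>_def mult_nonpos_nonneg)
    ultimately show "\<exists>y. ((\<lambda>s. V s * exp (\<kappa> * s)) has_real_derivative y) (at s) \<and> y \<le> 0"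
      by blast
  qed
  then have "V t * exp (\<kappa> * t) * exp (- \<kappa> * t) \<le> V 0 * exp (- \<kappa> * t)"
    by (simp add: mult_right_mono)
  then show ?thesis
    by (simp add: V_def \<kappa>_def mult.assoc exp_add[symmetric])
qed

lemma tendsto_equilibrium:
  assumes cont: "continuous_on {0..} x"
    and der: "\<And>t. t \<ge> 0 \<Longrightarrow> (x has_vector_derivative g (x t)) (at t within {0..})"
    and in_ball: "\<And>t. t \<ge> 0 \<Longrightarrow> norm (x t - e) < \<rho>"
  shows "(x \<longlongrightarrow> e) at_top"
proof -
  define \<kappa> where "\<kappa> = 2 * \<gamma> / K"
  define V0 where "V0 = B (x 0 - e) (x 0 - e)"
  have bound: "norm (x t - e) \<le> sqrt (V0 / m * exp (- \<kappa> * t))" if "t \<ge> 0" for t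
  proof -
    have "m * (norm (x t - e))\<^sup>2 \<le> V0 * exp (- \<kappa> * t)"
      using lower[of "x t - e"] exponential_decay[OF cont der in_ball that]
      unfolding V0_def \<kappa>_def by linarith
    then have "(norm (x t - e))\<^sup>2 \<le> V0 / m * exp (- \<kappa> * t)"
      using m_pos by (simp add: field_simps)
    then show ?thesis
      by (simp add: real_le_rsqrt)
  qed
  have "filterlim (\<lambda>t. - \<kappa> * t) at_bot at_top"
    using \<gamma>_pos K_pos unfolding \<kappa>_def
    by (intro filterlim_tendsto_neg_mult_at_bot[OF tendsto_const] filterlim_ident) auto
  then have "((\<lambda>t. exp (- \<kappa> * t)) \<longlongrightarrow> 0) at_top"
    by (rule filterlim_compose[OF exp_at_bot])
  then have "((\<lambda>t. sqrt (V0 / m * exp (- \<kappa> * t))) \<longlongrightarrow> sqrt (V0 / m * 0)) at_top"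
    by (intro tendsto_real_sqrt tendsto_mult tendsto_const)
  then have lim: "((\<lambda>t. sqrt (V0 / m * exp (- \<kappa> * t))) \<longlongrightarrow> 0) at_top"
    by simp
  have "eventually (\<lambda>t. norm (x t - e) \<le> sqrt (V0 / m * exp (- \<kappa> * t))) at_top"
    by (intro eventually_at_top_linorderI[of 0] bound)
  then have "((\<lambda>t. x t - e) \<longlongrightarrow> 0) at_top"
    by (rule Lim_null_comparison[OF _ lim])
  then show ?thesis
    by (simp add: Lim_null[symmetric])
qed

lemma lyapunov_stable:
  "\<forall>\<epsilon>>0. \<exists>\<delta>>0. \<forall>x T. ode_sol g X {0..<T} x \<and> dist (x 0) e < \<delta> \<longrightarrow>
     (\<forall>t\<in>{0..<T}. dist (x t) e < \<epsilon>)"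
proof (intro allI impI)
  fix \<epsilon> :: real assume "\<epsilon> > 0"
  define \<epsilon>' where "\<epsilon>' = min \<epsilon> \<rho>"
  have \<epsilon>': "0 < \<epsilon>'" "\<epsilon>' \<le> \<rho>" "\<epsilon>' \<le> \<epsilon>"
    using \<open>\<epsilon> > 0\<close> \<rho>_pos by (auto simp: \<epsilon>'_def)
  show "\<exists>\<delta>>0. \<forall>x T. ode_sol g X {0..<T} x \<and> dist (x 0) e < \<delta> \<longrightarrow>
     (\<forall>t\<in>{0..<T}. dist (x t) e < \<epsilon>)"
  proof (intro exI conjI allI impI ballI)
    show "\<epsilon>' * sqrt (m / K) > 0"
      using \<epsilon>' m_pos K_pos by simp
    fix x T t assume x: "ode_sol g X {0..<T} x \<and> dist (x 0) e < \<epsilon>' * sqrt (m / K)"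
      and "t \<in> {0..<T}"
    then have "norm (x t - e) < \<epsilon>'"
      using ode_sol_stays_in_ball[of X T x \<epsilon>' t] \<epsilon>' by (simp add: dist_norm)
    then show "dist (x t) e < \<epsilon>"
      using \<epsilon>' by (simp add: dist_norm)
  qed
qed

lemma solution_in_ball:
  assumes lip: "L-lipschitz_on (cball e \<rho>) g" and init: "K * (norm (x0 - e))\<^sup>2 < m * \<rho>\<^sup>2"
  obtains x where "x 0 = x0" "\<And>t. t \<ge> 0 \<Longrightarrow> (x has_vector_derivative g (x t)) (at t within {0..})"
    "\<And>t. t \<ge> 0 \<Longrightarrow> norm (x t - e) < \<rho>"
proof -
  obtain G where "L-lipschitz_on UNIV G" "\<And>y. norm (G y) \<le> norm (g e) + L * \<rho>"
    and G_eq: "\<And>y. y \<in> cball e \<rho> \<Longrightarrow> G y = g y"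
    using lipschitz_extension_from_cball[OF lip] \<rho>_pos by auto
  then obtain x where x0: "x 0 = x0"
    and der: "\<And>t. t \<ge> 0 \<Longrightarrow> (x has_vector_derivative G (x t)) (at t within {0..})"
    using bounded_lipschitz_ode_solution by blast
  have in_ball: "norm (x t - e) < \<rho>" if "t \<ge> 0" for t
  proof (rule stays_in_ball[where T = "t + 1"])
    have der': "(x has_vector_derivative G (x s)) (at s within {0..<t + 1})" if "s \<in> {0..<t + 1}" for s
      using der[of s] that by (auto intro: has_vector_derivative_within_subset)
    then show "continuous_on {0..<t + 1} x"
      unfolding continuous_on_eq_continuous_within by (blast intro: has_vector_derivative_continuous)
    show "(x has_vector_derivative g (x s)) (at s within {0..<t + 1})"
      if "s \<in> {0..<t + 1}" "norm (x s - e) < \<rho>" for s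
      using der'[OF that(1)] G_eq[of "x s"] that(2) by (simp add: dist_norm norm_minus_commute)
  qed (use that x0 init \<rho>_pos in auto)
  show thesis
  proof (rule that)
    show "(x has_vector_derivative g (x t)) (at t within {0..})" if "t \<ge> 0" for t
      using der[OF that] G_eq[of "x t"] in_ball[OF that] by (simp add: dist_norm norm_minus_commute)
  qed (use x0 in_ball in auto)
qed

lemma loc_asym_stableI:
  assumes "g e = 0" "cball e \<rho> \<subseteq> X" "L-lipschitz_on (cball e \<rho>) g"
  shows "loc_asym_stable g X e"
  unfolding loc_asym_stable_def
proof (intro conjI lyapunov_stable exI[of _ "\<rho> * sqrt (m / K)"] ballI allI impI)
  show "e \<in> X" "g e = 0" "\<rho> * sqrt (m / K) > 0"
    using assms \<rho>_pos m_pos K_pos by auto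
next
  fix x0 assume "x0 \<in> X" "dist x0 e < \<rho> * sqrt (m / K)"
  then have "K * (norm (x0 - e))\<^sup>2 < m * \<rho>\<^sup>2"
    by (intro initial_bound) (simp add: dist_norm)
  then obtain x where "x 0 = x0" and der: "\<And>t. t \<ge> 0 \<Longrightarrow> (x has_vector_derivative g (x t)) (at t within {0..})"
    and in_ball: "\<And>t. t \<ge> 0 \<Longrightarrow> norm (x t - e) < \<rho>"
    using solution_in_ball[OF assms(3)] by blast
  have "x t \<in> X" if "t \<ge> 0" for t
    using in_ball[OF that] by (intro subsetD[OF assms(2)]) (simp add: dist_norm norm_minus_commute)
  then have "ode_sol g X {0..} x"
    using der by (simp add: ode_sol_def)
  then show "\<exists>x. ode_sol g X {0..} x \<and> x 0 = x0"
    using \<open>x 0 = x0\<close> by blast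
next
  fix x assume x: "ode_sol g X {0..} x \<and> dist (x 0) e < \<rho> * sqrt (m / K)"
  then have sol: "ode_sol g X {0..} x"
    by simp
  have in_ball: "norm (x t - e) < \<rho>" if "t \<ge> 0" for t
  proof (rule ode_sol_stays_in_ball[OF ode_sol_subset[OF sol, of "{0..<t + 1}"]])
    show "norm (x 0 - e) < \<rho> * sqrt (m / K)"
      using x by (simp add: dist_norm)
  qed (use that \<rho>_pos in auto)
  have der: "\<And>t. t \<ge> 0 \<Longrightarrow> (x has_vector_derivative g (x t)) (at t within {0..})"
    using sol by (simp add: ode_sol_def)
  show "(x \<longlongrightarrow> e) at_top"
    by (rule tendsto_equilibrium[OF ode_sol_continuous_on[OF sol] der in_ball])
qed

end

definition strict_lyapunov_form :: "('a::real_normed_vector \<Rightarrow> 'a \<Rightarrow> real) \<Rightarrow> ('a \<Rightarrow> 'a) \<Rightarrow> bool" where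
  "strict_lyapunov_form B J \<longleftrightarrow> bounded_bilinear B \<and> (\<forall>z h. B z h = B h z) \<and>
     (\<exists>m>0. \<forall>z. m * (norm z)\<^sup>2 \<le> B z z) \<and> (\<exists>\<gamma>>0. \<forall>z. B z (J z) \<le> - \<gamma> * (norm z)\<^sup>2)"

theorem loc_asym_stable_linearization:
  fixes g :: "'a::euclidean_space \<Rightarrow> 'a"
  assumes "g e = 0" and "(g has_derivative J) (at e)" and "strict_lyapunov_form B J"
    and "r > 0" "cball e r \<subseteq> X" "L-lipschitz_on (cball e r) g"
  shows "loc_asym_stable g X e"
proof -
  obtain m \<gamma> where B: "bounded_bilinear B" "\<And>z h. B z h = B h z"
    and "m > 0" "\<And>z. m * (norm z)\<^sup>2 \<le> B z z" and "\<gamma> > 0" "\<And>z. B z (J z) \<le> - \<gamma> * (norm z)\<^sup>2"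
    using assms(3) unfolding strict_lyapunov_form_def by blast
  obtain K where K: "\<And>z. norm (B z z) \<le> norm z * norm z * K"
    using bounded_bilinear.pos_bounded[OF B(1)] by blast
  have upper: "B z z \<le> K * (norm z)\<^sup>2" for z
    using K[of z] by (simp add: power2_eq_square mult_ac)
  obtain \<rho> where "\<rho> > 0" "\<And>y. norm (y - e) < \<rho> \<Longrightarrow> B (y - e) (g y) \<le> - \<gamma> / 2 * (norm (y - e))\<^sup>2"
    using lyapunov_decrease_near_equilibrium[OF assms(1,2) B(1)] \<open>\<gamma> > 0\<close> \<open>\<And>z. B z (J z) \<le> _\<close> by blast
  then interpret quadratic_lyapunov g e B m K "\<gamma> / 2" "min \<rho> r"
    using B(1) \<open>m > 0\<close> \<open>\<And>z. m * (norm z)\<^sup>2 \<le> B z z\<close> upper \<open>\<gamma> > 0\<close> \<open>r > 0\<close>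
    by (intro quadratic_lyapunov.intro B(2)) auto
  show ?thesis
    using assms(1,5) by (intro loc_asym_stableI[of X L] lipschitz_on_subset[OF assms(6)]) auto
qed

section \<open>A Lyapunov form for Hurwitz quartics\<close>

lemma norm_power2_eq_sum_Basis:
  fixes x :: "'a::euclidean_space"
  shows "(norm x)\<^sup>2 = (\<Sum>b\<in>Basis. (x \<bullet> b)\<^sup>2)"
  unfolding power2_norm_eq_inner by (subst euclidean_inner) (simp add: power2_eq_square)

lemma linear_injective_lower_bound:
  fixes J :: "'a::euclidean_space \<Rightarrow> 'a"
  assumes "linear J" "\<And>z. J z = 0 \<Longrightarrow> z = 0"
  obtains \<kappa> where "\<kappa> > 0" "\<And>z. \<kappa> * norm z \<le> norm (J z)"
proof -
  have "bounded_linear J"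
    using assms(1) by (simp add: linear_conv_bounded_linear)
  then have "\<exists>\<kappa>>0. \<forall>z\<in>UNIV. \<kappa> * norm z \<le> norm (J z)"
    using assms(2) by (intro injective_imp_isometric closed_UNIV subspace_UNIV) auto
  then show thesis
    using that by blast
qed

locale quartic =
  fixes c1 c2 c3 c4 :: real
begin

definition hurwitz_det2 :: real where
  "hurwitz_det2 = c1 * c2 - c3"

definition hurwitz_det3 :: real where
  "hurwitz_det3 = c1 * c2 * c3 - c3\<^sup>2 - c1\<^sup>2 * c4"

lemma hurwitz_c3_pos:
  assumes "c1 > 0" "c4 > 0" "hurwitz_det2 > 0" "hurwitz_det3 > 0"
  shows "c3 > 0"
proof -
  have "c3 * hurwitz_det2 = hurwitz_det3 + c1\<^sup>2 * c4"
    by (simp add: hurwitz_det2_def hurwitz_det3_def algebra_simps power2_eq_square)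
  moreover have "c1\<^sup>2 * c4 > 0"
    using assms(1,2) by simp
  ultimately have "c3 * hurwitz_det2 > 0"
    using assms(4) by linarith
  with assms(3) show ?thesis
    by (simp add: zero_less_mult_iff)
qed

text \<open>
  The coefficients solve the Lyapunov equation of the companion matrix of
  \<open>X\<^sup>4 + c\<^sub>1X\<^sup>3 + c\<^sub>2X\<^sup>2 + c\<^sub>3X + c\<^sub>4\<close>, with \<open>-\<Delta>\<^sub>3 a\<^sub>1\<^sup>2\<close> as prescribed derivative.
\<close>

definition companion_form ::
    "real \<Rightarrow> real \<Rightarrow> real \<Rightarrow> real \<Rightarrow> real \<Rightarrow> real \<Rightarrow> real \<Rightarrow> real \<Rightarrow> real" where
  "companion_form a0 a1 a2 a3 b0 b1 b2 b3 =
     c4 * hurwitz_det2 * a0 * b0 + c4 * c1\<^sup>2 * (a0 * b1 + a1 * b0) + c4 * c1 * (a0 * b2 + a2 * b0)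
     + (c1\<^sup>2 * c3 + c2 * hurwitz_det2 - c1 * c4) * a1 * b1 + c1\<^sup>2 * c2 * (a1 * b2 + a2 * b1)
     + hurwitz_det2 * (a1 * b3 + a3 * b1) + (c1 ^ 3 + c3) * a2 * b2
     + c1\<^sup>2 * (a2 * b3 + a3 * b2) + c1 * a3 * b3"

lemma companion_form_commute:
  "companion_form a0 a1 a2 a3 b0 b1 b2 b3 = companion_form b0 b1 b2 b3 a0 a1 a2 a3"
  by (simp add: companion_form_def algebra_simps)

lemma companion_form_shift:
  assumes "a4 = - c1 * a3 - c2 * a2 - c3 * a1 - c4 * a0"
  shows "companion_form a0 a1 a2 a3 a1 a2 a3 a4 = - hurwitz_det3 * a1\<^sup>2"
  unfolding assms by (simp add: companion_form_def hurwitz_det2_def hurwitz_det3_def algebra_simps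
      power2_eq_square power3_eq_cube)

lemma companion_form_coercive:
  assumes "c1 > 0" "c3 > 0" "c4 > 0" "hurwitz_det3 > 0"
  shows "c4 * hurwitz_det3 / c3 * a0\<^sup>2 \<le> companion_form a0 a1 a2 a3 a0 a1 a2 a3"
proof -
  have "companion_form a0 a1 a2 a3 a0 a1 a2 a3 =
      c1 * (a3 + c1 * a2 + hurwitz_det2 / c1 * a1)\<^sup>2 + c3 * (a2 + c1 * a1 + c1 * c4 / c3 * a0)\<^sup>2
      + hurwitz_det3 / c1 * a1\<^sup>2 + c4 * hurwitz_det3 / c3 * a0\<^sup>2"
    using assms by (simp add: companion_form_def hurwitz_det2_def hurwitz_det3_def field_simps
        power2_eq_square power3_eq_cube)
  moreover have "0 \<le> c1 * (a3 + c1 * a2 + hurwitz_det2 / c1 * a1)\<^sup>2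
      + c3 * (a2 + c1 * a1 + c1 * c4 / c3 * a0)\<^sup>2 + hurwitz_det3 / c1 * a1\<^sup>2"
    using assms by simp
  ultimately show ?thesis
    by linarith
qed

lemma companion_form_add_right:
  "companion_form a0 a1 a2 a3 (b0 + d0) (b1 + d1) (b2 + d2) (b3 + d3) =
     companion_form a0 a1 a2 a3 b0 b1 b2 b3 + companion_form a0 a1 a2 a3 d0 d1 d2 d3"
  and companion_form_scale_right:
  "companion_form a0 a1 a2 a3 (s * b0) (s * b1) (s * b2) (s * b3) =
     s * companion_form a0 a1 a2 a3 b0 b1 b2 b3"
  by (simp_all add: companion_form_def algebra_simps)

text \<open>
  Evaluating \<open>companion_form\<close> on the coordinates of the Krylov vectors \<open>z, Jz, J\<^sup>2z, J\<^sup>3z\<close>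
  transfers it to every \<open>J\<close> annihilated by the quartic.
\<close>

definition lyapunov_form :: "('a::euclidean_space \<Rightarrow> 'a) \<Rightarrow> 'a \<Rightarrow> 'a \<Rightarrow> real" where
  "lyapunov_form J z h = (\<Sum>b\<in>Basis.
     companion_form (z \<bullet> b) (J z \<bullet> b) (J (J z) \<bullet> b) (J (J (J z)) \<bullet> b)
                    (h \<bullet> b) (J h \<bullet> b) (J (J h) \<bullet> b) (J (J (J h)) \<bullet> b))"

lemma lyapunov_form_commute: "lyapunov_form J z h = lyapunov_form J h z"
  unfolding lyapunov_form_def by (subst companion_form_commute) (rule refl)

lemma lyapunov_form_coercive:
  assumes "c1 > 0" "c3 > 0" "c4 > 0" "hurwitz_det3 > 0"
  shows "c4 * hurwitz_det3 / c3 * (norm z)\<^sup>2 \<le> lyapunov_form J z z"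
proof -
  have "c4 * hurwitz_det3 / c3 * (norm z)\<^sup>2 = (\<Sum>b\<in>Basis. c4 * hurwitz_det3 / c3 * (z \<bullet> b)\<^sup>2)"
    by (simp add: norm_power2_eq_sum_Basis sum_distrib_left)
  also have "\<dots> \<le> lyapunov_form J z z"
    unfolding lyapunov_form_def by (intro sum_mono companion_form_coercive assms)
  finally show ?thesis .
qed

lemma bounded_bilinear_lyapunov_form:
  assumes "linear J"
  shows "bounded_bilinear (lyapunov_form J)"
proof -
  have lin: "linear (lyapunov_form J z)" for z
    unfolding lyapunov_form_def
    by (intro linear_compose_sum ballI linearI)
       (simp_all add: linear_add[OF assms] linear_scale[OF assms] inner_add_left
         companion_form_add_right companion_form_scale_right)
  have "bilinear (lyapunov_form J)"
    unfolding bilinear_def using lin by (simp add: lyapunov_form_commute[of J _])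
  then show ?thesis
    by (simp add: bilinear_conv_bounded_bilinear)
qed

lemma lyapunov_form_along:
  assumes "linear J"
    and annihilates: "\<And>z. J (J (J (J z))) + c1 *\<^sub>R J (J (J z)) + c2 *\<^sub>R J (J z) + c3 *\<^sub>R J z + c4 *\<^sub>R z = 0"
  shows "lyapunov_form J z (J z) = - hurwitz_det3 * (norm (J z))\<^sup>2"
proof -
  have "J (J (J (J z))) \<bullet> b = - c1 * (J (J (J z)) \<bullet> b) - c2 * (J (J z) \<bullet> b) - c3 * (J z \<bullet> b) - c4 * (z \<bullet> b)"
    for b
    using arg_cong[OF annihilates[of z], of "\<lambda>y. y \<bullet> b"]
    by (simp add: inner_add_left algebra_simps)
  then have "lyapunov_form J z (J z) = (\<Sum>b\<in>Basis. - hurwitz_det3 * (J z \<bullet> b)\<^sup>2)"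
    unfolding lyapunov_form_def by (intro sum.cong refl companion_form_shift)
  also have "\<dots> = - hurwitz_det3 * (norm (J z))\<^sup>2"
    by (simp add: norm_power2_eq_sum_Basis sum_distrib_left)
  finally show ?thesis .
qed

lemma strict_lyapunov_form_lyapunov_form:
  assumes "linear J"
    and annihilates: "\<And>z. J (J (J (J z))) + c1 *\<^sub>R J (J (J z)) + c2 *\<^sub>R J (J z) + c3 *\<^sub>R J z + c4 *\<^sub>R z = 0"
    and "c1 > 0" "c4 > 0" "hurwitz_det2 > 0" "hurwitz_det3 > 0"
  shows "strict_lyapunov_form (lyapunov_form J) J"
proof -
  have "c3 > 0"
    using assms(3-6) by (rule hurwitz_c3_pos)
  have "z = 0" if "J z = 0" for z
  proof -
    have "c4 *\<^sub>R z = 0"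
      using annihilates[of z] that linear_0[OF assms(1)] by simp
    then show ?thesis
      using \<open>c4 > 0\<close> by simp
  qed
  then obtain \<kappa> where "\<kappa> > 0" and \<kappa>: "\<And>z. \<kappa> * norm z \<le> norm (J z)"
    using linear_injective_lower_bound[OF assms(1)] by blast
  have "lyapunov_form J z (J z) \<le> - (hurwitz_det3 * \<kappa>\<^sup>2) * (norm z)\<^sup>2" for z
  proof -
    have "(\<kappa> * norm z)\<^sup>2 \<le> (norm (J z))\<^sup>2"
      using \<kappa>[of z] \<open>\<kappa> > 0\<close> by (intro power_mono) auto
    then show ?thesis
      using \<open>hurwitz_det3 > 0\<close> lyapunov_form_along[OF assms(1) annihilates, of z]
      by (simp add: power_mult_distrib)
  qed
  moreover have "c4 * hurwitz_det3 / c3 > 0" "hurwitz_det3 * \<kappa>\<^sup>2 > 0"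
    using assms(4,6) \<open>c3 > 0\<close> \<open>\<kappa> > 0\<close> by simp_all
  ultimately show ?thesis
    unfolding strict_lyapunov_form_def
    using bounded_bilinear_lyapunov_form[OF assms(1)] lyapunov_form_commute
      lyapunov_form_coercive[OF assms(3) \<open>c3 > 0\<close> assms(4,6)]
    by blast
qed

end

section \<open>Incidence functions\<close>

lemma pd1_eq_derivative:
  assumes "((\<lambda>p. G (fst p) (snd p)) has_derivative D) (at (s, i))"
  shows "pd1 G s i = D (1, 0)"
proof -
  have "((\<lambda>x. (x, i)) has_derivative (\<lambda>h. (h, 0))) (at s)"
    by (auto intro!: derivative_eq_intros)
  from has_derivative_compose[OF this assms]
  have "((\<lambda>x. G x i) has_derivative (\<lambda>h. D (h, 0))) (at s)"
    by simp
  moreover have "h * D (1, 0) = D (h, 0)" for h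
    using linear_scale[OF has_derivative_linear[OF assms], of h "(1, 0)"] by simp
  ultimately have "((\<lambda>x. G x i) has_real_derivative D (1, 0)) (at s)"
    by (rule has_derivative_imp_has_field_derivative)
  then show ?thesis
    unfolding pd1_def by (rule DERIV_imp_deriv)
qed

lemma pd2_eq_derivative:
  assumes "((\<lambda>p. G (fst p) (snd p)) has_derivative D) (at (s, i))"
  shows "pd2 G s i = D (0, 1)"
proof -
  have "((\<lambda>y. (s, y)) has_derivative (\<lambda>h. (0, h))) (at i)"
    by (auto intro!: derivative_eq_intros)
  from has_derivative_compose[OF this assms]
  have "((\<lambda>y. G s y) has_derivative (\<lambda>h. D (0, h))) (at i)"
    by simp
  moreover have "h * D (0, 1) = D (0, h)" for h
    using linear_scale[OF has_derivative_linear[OF assms], of h "(0, 1)"] by simp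
  ultimately have "((\<lambda>y. G s y) has_real_derivative D (0, 1)) (at i)"
    by (rule has_derivative_imp_has_field_derivative)
  then show ?thesis
    unfolding pd2_def by (rule DERIV_imp_deriv)
qed

lemma has_derivative_partial_derivatives:
  fixes G :: "real \<Rightarrow> real \<Rightarrow> real"
  assumes "((\<lambda>p. G (fst p) (snd p)) has_derivative D) (at (s, i))"
  shows "((\<lambda>p. G (fst p) (snd p)) has_derivative (\<lambda>h. fst h * pd1 G s i + snd h * pd2 G s i)) (at (s, i))"
proof -
  have lin: "linear D"
    using assms has_derivative_linear by blast
  have "D h = fst h * pd1 G s i + snd h * pd2 G s i" for h
    using linear_add[OF lin, of "(fst h, 0)" "(0, snd h)"]
      linear_scale[OF lin, of "fst h" "(1, 0)"] linear_scale[OF lin, of "snd h" "(0, 1)"]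
    by (simp add: pd1_eq_derivative[OF assms] pd2_eq_derivative[OF assms])
  then have "D = (\<lambda>h. fst h * pd1 G s i + snd h * pd2 G s i)"
    by (rule ext)
  with assms show ?thesis
    by simp
qed

lemma at_within_Rplus2:
  assumes "0 < s" "0 < i"
  shows "at (s, i) within Rplus2 = at (s, i)"
proof (rule at_within_interior)
  have "open {p :: real \<times> real. 0 < fst p \<and> 0 < snd p}"
    by (intro open_Collect_conj open_Collect_less continuous_intros)
  moreover have "{p :: real \<times> real. 0 < fst p \<and> 0 < snd p} \<subseteq> Rplus2"
    by (auto simp: Rplus2_def)
  ultimately have "{p :: real \<times> real. 0 < fst p \<and> 0 < snd p} \<subseteq> interior Rplus2"
    by (rule interior_maximal[rotated])
  then show "(s, i) \<in> interior Rplus2"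
    using assms by auto
qed

lemma incidence_okD:
  assumes "incidence_ok F f"
  shows incidence_ok_eq: "\<And>s i. 0 \<le> s \<Longrightarrow> 0 \<le> i \<Longrightarrow> F s i = i * f s i"
    and incidence_ok_C2: "C2_on Rplus2 (\<lambda>(s, i). F s i)"
    and incidence_ok_nonneg: "\<And>s i. 0 \<le> s \<Longrightarrow> 0 \<le> i \<Longrightarrow> 0 \<le> f s i"
    and incidence_ok_mono1: "\<And>s i. 0 \<le> s \<Longrightarrow> 0 \<le> i \<Longrightarrow>
      \<exists>d>0. ((\<lambda>x. f x i) has_real_derivative d) (at s within {0..})"
    and incidence_ok_mono2: "\<And>s i. 0 \<le> s \<Longrightarrow> 0 \<le> i \<Longrightarrow>
      \<exists>d\<le>0. ((\<lambda>y. f s y) has_real_derivative d) (at i within {0..})"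
  using assms unfolding incidence_ok_def by simp_all

lemma incidence_C1:
  assumes "incidence_ok F f"
  obtains DF where
    "\<And>p. p \<in> Rplus2 \<Longrightarrow> ((\<lambda>p. F (fst p) (snd p)) has_derivative blinfun_apply (DF p)) (at p within Rplus2)"
    "continuous_on Rplus2 DF"
proof -
  obtain DF D2F where DF: "\<And>p. p \<in> Rplus2 \<Longrightarrow> ((\<lambda>(s, i). F s i) has_derivative blinfun_apply (DF p)) (at p within Rplus2)"
    and D2F: "\<And>p. p \<in> Rplus2 \<Longrightarrow> (DF has_derivative blinfun_apply (D2F p)) (at p within Rplus2)"
    using incidence_ok_C2[OF assms] unfolding C2_on_def by blast
  have "((\<lambda>p. F (fst p) (snd p)) has_derivative blinfun_apply (DF p)) (at p within Rplus2)"
    if "p \<in> Rplus2" for p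
    using DF[OF that] by (simp add: case_prod_unfold)
  moreover have "continuous_on Rplus2 DF"
    unfolding continuous_on_eq_continuous_within using D2F has_derivative_continuous by blast
  ultimately show thesis
    by (rule that)
qed

lemma incidence_has_derivative:
  assumes "incidence_ok F f" "0 < s" "0 < i"
  shows "((\<lambda>p. F (fst p) (snd p)) has_derivative (\<lambda>h. fst h * pd1 F s i + snd h * pd2 F s i)) (at (s, i))"
proof -
  obtain DF where DF: "\<And>p. p \<in> Rplus2 \<Longrightarrow>
      ((\<lambda>p. F (fst p) (snd p)) has_derivative blinfun_apply (DF p)) (at p within Rplus2)"
    using incidence_C1[OF assms(1)] by blast
  have "(s, i) \<in> Rplus2"
    using assms(2,3) by (simp add: Rplus2_def)
  with DF have "((\<lambda>p. F (fst p) (snd p)) has_derivative blinfun_apply (DF (s, i))) (at (s, i))"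
    using at_within_Rplus2[OF assms(2,3)] by metis
  then show ?thesis
    by (rule has_derivative_partial_derivatives)
qed

lemma cball_subset_Rplus2:
  assumes "\<rho> < s" "\<rho> < i"
  shows "cball (s, i) \<rho> \<subseteq> Rplus2"
proof
  fix p assume "p \<in> cball (s, i) \<rho>"
  then have "dist s (fst p) \<le> \<rho>" "dist i (snd p) \<le> \<rho>"
    using dist_fst_le[of "(s, i)" p] dist_snd_le[of "(s, i)" p] by auto
  then show "p \<in> Rplus2"
    using assms by (auto simp: Rplus2_def dist_real_def case_prod_unfold)
qed

lemma incidence_lipschitz:
  assumes "incidence_ok F f" "compact K" "convex K" "K \<subseteq> Rplus2"
  obtains L where "L-lipschitz_on K (\<lambda>p. F (fst p) (snd p))"
proof -
  obtain DF where DF: "\<And>p. p \<in> Rplus2 \<Longrightarrow> ((\<lambda>p. F (fst p) (snd p)) has_derivative blinfun_apply (DF p)) (at p within Rplus2)"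
    and cont: "continuous_on Rplus2 DF"
    using incidence_C1[OF assms(1)] by blast
  have "bounded (DF ` K)"
    using assms(2,4) by (intro compact_imp_bounded compact_continuous_image continuous_on_subset[OF cont])
  then obtain M where M: "M > 0" "\<And>p. p \<in> K \<Longrightarrow> norm (DF p) \<le> M"
    unfolding bounded_pos by blast
  have "M-lipschitz_on K (\<lambda>p. F (fst p) (snd p))"
  proof (rule bounded_derivative_imp_lipschitz[OF _ assms(3)])
    show "((\<lambda>p. F (fst p) (snd p)) has_derivative blinfun_apply (DF p)) (at p within K)" if "p \<in> K" for p
      using DF[of p] that assms(4) has_derivative_subset by blast
    show "onorm (blinfun_apply (DF p)) \<le> M" if "p \<in> K" for p
      using M(2)[OF that] by (simp add: norm_blinfun.rep_eq)
  qed (use M in simp)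
  then show thesis
    by (rule that)
qed

lemma incidence_pd1_pos:
  assumes "incidence_ok F f" "0 < s" "0 < i"
  shows "pd1 F s i > 0"
proof -
  obtain d where "d > 0" and d: "((\<lambda>x. f x i) has_real_derivative d) (at s within {0..})"
    using incidence_ok_mono1[OF assms(1), of s i] assms(2,3) by auto
  have "((\<lambda>x. F x i) has_real_derivative i * d) (at s within {0..})"
    using DERIV_cmult[OF d, of i]
    by (rule has_field_derivative_transform_within[where d = 1]) (use assms incidence_ok_eq in auto)
  moreover have "at s within {0..} = at s"
    using assms(2) by (intro at_within_interior) auto
  ultimately have "pd1 F s i = i * d"
    unfolding pd1_def by (simp add: DERIV_imp_deriv)
  then show ?thesis
    using \<open>d > 0\<close> assms(3) by simp
qed

lemma incidence_pd2_le:
  assumes "incidence_ok F f" "0 < s" "0 < i"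
  shows "pd2 F s i \<le> f s i"
proof -
  obtain d where "d \<le> 0" and d: "((\<lambda>y. f s y) has_real_derivative d) (at i within {0..})"
    using incidence_ok_mono2[OF assms(1), of s i] assms(2,3) by auto
  have "((\<lambda>y. F s y) has_real_derivative 1 * f s i + d * i) (at i within {0..})"
    using DERIV_mult[OF DERIV_ident d]
    by (rule has_field_derivative_transform_within[where d = 1]) (use assms incidence_ok_eq in auto)
  moreover have "at i within {0..} = at i"
    using assms(3) by (intro at_within_interior) auto
  ultimately have "pd2 F s i = f s i + d * i"
    unfolding pd2_def by (simp add: DERIV_imp_deriv)
  then show ?thesis
    using \<open>d \<le> 0\<close> assms(3) by (simp add: mult_nonpos_nonneg)
qed

lemma incidence_has_derivative_linear_comp:
  assumes "incidence_ok F f" "bounded_linear P" "P e = (s, i)" "0 < s" "0 < i"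
  shows "((\<lambda>y. F (fst (P y)) (snd (P y))) has_derivative
    (\<lambda>h. fst (P h) * pd1 F s i + snd (P h) * pd2 F s i)) (at e)"
proof -
  have "((\<lambda>p. F (fst p) (snd p)) has_derivative (\<lambda>h. fst h * pd1 F s i + snd h * pd2 F s i)) (at (P e))"
    using incidence_has_derivative[OF assms(1,4,5)] assms(3) by simp
  from has_derivative_compose[OF bounded_linear_imp_has_derivative[OF assms(2)] this]
  show ?thesis
    by simp
qed

lemma incidence_lipschitz_comp:
  assumes "incidence_ok F f" "\<And>y z. dist (P y) (P z) \<le> dist y z" "P e = (s, i)" "\<rho> < s" "\<rho> < i"
  obtains L where "L-lipschitz_on (cball e \<rho>) (\<lambda>y. F (fst (P y)) (snd (P y)))"
proof -
  obtain L where L: "L-lipschitz_on (cball (s, i) \<rho>) (\<lambda>p. F (fst p) (snd p))"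
    using incidence_lipschitz[OF assms(1) compact_cball convex_cball cball_subset_Rplus2[OF assms(4,5)]] .
  have "1-lipschitz_on (cball e \<rho>) P"
    using assms(2) by (auto intro: lipschitz_onI)
  moreover have "P ` cball e \<rho> \<subseteq> cball (s, i) \<rho>"
  proof
    fix p assume "p \<in> P ` cball e \<rho>"
    then obtain y where "dist e y \<le> \<rho>" "p = P y"
      by auto
    then show "p \<in> cball (s, i) \<rho>"
      using assms(2)[of e y] assms(3) by simp
  qed
  ultimately have "(L * 1)-lipschitz_on (cball e \<rho>) (\<lambda>y. F (fst (P y)) (snd (P y)))"
    by (intro lipschitz_on_compose2[of 1 _ P L "\<lambda>p. F (fst p) (snd p)"] lipschitz_on_subset[OF L])
  then show thesis
    by (rule that)
qed

section \<open>The model\<close>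

text \<open>
  The Jacobian of the model at an equilibrium in the notation of the paper (\<open>C\<^sub>2\<^sub>1 = r\<close>, the
  entries not named vanish) and the coefficients of its characteristic polynomial.
\<close>

locale jacobian4 =
  fixes C11 C13 C14 C22 C24 C31 C33 C41 C42 C44 r :: real
begin

definition jac :: "real \<times> real \<times> real \<times> real \<Rightarrow> real \<times> real \<times> real \<times> real" where
  "jac = (\<lambda>(s, v, i1, i2). (C11 * s + C13 * i1 + C14 * i2, r * s + C22 * v + C24 * i2,
     C31 * s + C33 * i1, C41 * s + C42 * v + C44 * i2))"

definition c1 :: real where
  "c1 = - C44 - C33 - C22 - C11"

definition c2 :: real where
  "c2 = - C41 * C14 - C42 * C24 + C44 * C33 + C44 * C22 + C44 * C11
     - C31 * C13 + C33 * C22 + C33 * C11 + C22 * C11"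

definition c3 :: real where
  "c3 = - r * C42 * C14 + C41 * C14 * C33 + C41 * C14 * C22 + C42 * C24 * C33
     + C42 * C24 * C11 + C44 * C31 * C13 - C44 * C33 * C22 - C44 * C33 * C11
     - C44 * C22 * C11 + C31 * C13 * C22 - C33 * C22 * C11"

definition c4 :: real where
  "c4 = r * C42 * C14 * C33 - C41 * C14 * C33 * C22 + C42 * C24 * C31 * C13
     - C42 * C24 * C33 * C11 - C44 * C31 * C13 * C22 + C44 * C33 * C22 * C11"

lemma linear_jac: "linear jac"
  by (rule linearI) (simp_all add: jac_def case_prod_unfold algebra_simps)

lemma jac_annihilated:
  "jac (jac (jac (jac z))) + c1 *\<^sub>R jac (jac (jac z)) + c2 *\<^sub>R jac (jac z) + c3 *\<^sub>R jac z + c4 *\<^sub>R z = 0"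
  by (cases z) (simp add: jac_def c1_def c2_def c3_def c4_def algebra_simps zero_prod_def)

lemma char_coeffs_pos:
  assumes "C31 > 0" "C41 > 0" "C42 > 0" "C24 < 0" "r > 0" "mu > 0"
    and C11: "C11 = - C31 - C41 - r - mu" and C22: "C22 = - mu - C42"
    and "C33 \<le> 0" "C13 + C33 < 0" "C44 \<le> 0" "C14 + C44 \<le> 0"
  shows "c1 > 0" "c4 > 0"
proof -
  show "c1 > 0"
    using assms unfolding c1_def by linarith
  define n u w a b where "n = - C24" "u = - C33" "w = - C44" "a = - (C13 + C33)" "b = - (C14 + C44)"
  have "n > 0" "u \<ge> 0" "w \<ge> 0" "a > 0" "b \<ge> 0"
    using assms by (auto simp: n_u_w_a_b_def)
  have "c4 = r * C42 * u * b + C41 * (mu + C42) * u * b + C42 * n * C31 * a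
      + C42 * n * u * C41 + C42 * n * u * (r + mu) + w * C31 * (mu + C42) * a
      + w * u * (mu * r + mu * mu + C42 * mu)"
    unfolding c4_def by (simp add: n_u_w_a_b_def C11 C22 algebra_simps)
  moreover have "C42 * n * C31 * a > 0"
    using assms \<open>n > 0\<close> \<open>a > 0\<close> by (intro mult_pos_pos) auto
  moreover have "r * C42 * u * b \<ge> 0" "C41 * (mu + C42) * u * b \<ge> 0" "C42 * n * u * C41 \<ge> 0"
    "C42 * n * u * (r + mu) \<ge> 0" "w * C31 * (mu + C42) * a \<ge> 0"
    "w * u * (mu * r + mu * mu + C42 * mu) \<ge> 0"
    using assms \<open>n > 0\<close> \<open>u \<ge> 0\<close> \<open>w \<ge> 0\<close> \<open>a > 0\<close> \<open>b \<ge> 0\<close>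
    by (auto intro!: mult_nonneg_nonneg add_nonneg_nonneg)
  ultimately show "c4 > 0"
    by linarith
qed

end

lemma cball_subset_Rplus4:
  assumes "\<rho> < s" "\<rho> < v" "\<rho> < i1" "\<rho> < i2"
  shows "cball (s, v, i1, i2) \<rho> \<subseteq> Rplus4"
proof
  fix y assume "y \<in> cball (s, v, i1, i2) \<rho>"
  then have "dist (s, v, i1, i2) y \<le> \<rho>"
    by simp
  then have ds: "dist s (fst y) \<le> \<rho>" and d1: "dist (v, i1, i2) (snd y) \<le> \<rho>"
    using dist_fst_le[of "(s, v, i1, i2)" y] dist_snd_le[of "(s, v, i1, i2)" y] by simp_all
  then have dv: "dist v (fst (snd y)) \<le> \<rho>" and d2: "dist (i1, i2) (snd (snd y)) \<le> \<rho>"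
    using dist_fst_le[of "(v, i1, i2)" "snd y"] dist_snd_le[of "(v, i1, i2)" "snd y"] by simp_all
  then have "dist i1 (fst (snd (snd y))) \<le> \<rho>" "dist i2 (snd (snd (snd y))) \<le> \<rho>"
    using dist_fst_le[of "(i1, i2)" "snd (snd y)"] dist_snd_le[of "(i1, i2)" "snd (snd y)"] by simp_all
  with ds dv show "y \<in> Rplus4"
    using assms by (auto simp: Rplus4_def dist_real_def case_prod_unfold)
qed

lemma model_rhs_components:
  "model_rhs Lam mu r k gamma1 gamma2 v1 v2 F1 F2 = (\<lambda>y.
     (Lam - F1 (fst y) (fst (snd (snd y))) - F2 (fst y) (snd (snd (snd y))) - (r + mu) * fst y,
      r * fst y - mu * fst (snd y) - k * (snd (snd (snd y)) * fst (snd y)),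
      F1 (fst y) (fst (snd (snd y))) - (gamma1 + v1 + mu) * fst (snd (snd y)),
      F2 (fst y) (snd (snd (snd y))) + k * (snd (snd (snd y)) * fst (snd y))
        - (gamma2 + v2 + mu) * snd (snd (snd y))))"
  by (simp add: model_rhs_def case_prod_unfold fun_eq_iff algebra_simps)

lemma model_rhs_has_derivative:
  assumes "incidence_ok F1 f1" "incidence_ok F2 f2" "0 < S" "0 < I1" "0 < I2"
  shows "(model_rhs Lam mu r k gamma1 gamma2 v1 v2 F1 F2 has_derivative
    jacobian4.jac (- pd1 F1 S I1 - pd1 F2 S I2 - (r + mu)) (- pd2 F1 S I1) (- pd2 F2 S I2)
      (- mu - k * I2) (- k * V) (pd1 F1 S I1) (pd2 F1 S I1 - (gamma1 + v1 + mu))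
      (pd1 F2 S I2) (k * I2) (pd2 F2 S I2 + k * V - (gamma2 + v2 + mu)) r) (at (S, V, I1, I2))"
proof -
  have lin: "bounded_linear (\<lambda>y. (fst y, fst (snd (snd y))))" "bounded_linear (\<lambda>y. (fst y, snd (snd (snd y))))"
    by (intro bounded_linear_Pair bounded_linear_fst_comp bounded_linear_snd_comp bounded_linear_ident)+
  have "((\<lambda>y. F1 (fst y) (fst (snd (snd y)))) has_derivative
      (\<lambda>h. fst h * pd1 F1 S I1 + fst (snd (snd h)) * pd2 F1 S I1)) (at (S, V, I1, I2))"
    using incidence_has_derivative_linear_comp[OF assms(1) lin(1) _ assms(3,4), of "(S, V, I1, I2)"] by simp
  moreover have "((\<lambda>y. F2 (fst y) (snd (snd (snd y)))) has_derivative
      (\<lambda>h. fst h * pd1 F2 S I2 + snd (snd (snd h)) * pd2 F2 S I2)) (at (S, V, I1, I2))"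
    using incidence_has_derivative_linear_comp[OF assms(2) lin(2) _ assms(3,5), of "(S, V, I1, I2)"] by simp
  ultimately show ?thesis
    unfolding model_rhs_components
    by (auto intro!: derivative_eq_intros simp: jacobian4.jac_def case_prod_unfold fun_eq_iff algebra_simps)
qed

lemma lipschitz_on_mult:
  fixes u w :: "'a::metric_space \<Rightarrow> real"
  assumes "A-lipschitz_on U u" "B-lipschitz_on U w" "M \<ge> 0"
    and "\<And>x. x \<in> U \<Longrightarrow> \<bar>u x\<bar> \<le> M" "\<And>x. x \<in> U \<Longrightarrow> \<bar>w x\<bar> \<le> M"
  shows "(M * (A + B))-lipschitz_on U (\<lambda>x. u x * w x)"
proof (rule lipschitz_onI)
  fix x y assume "x \<in> U" "y \<in> U"
  have "dist (u x * w x) (u y * w y) = \<bar>u x * (w x - w y) + w y * (u x - u y)\<bar>"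
    by (simp add: dist_real_def algebra_simps)
  also have "\<dots> \<le> \<bar>u x\<bar> * \<bar>w x - w y\<bar> + \<bar>w y\<bar> * \<bar>u x - u y\<bar>"
    by (metis abs_mult abs_triangle_ineq)
  also have "\<dots> \<le> M * (B * dist x y) + M * (A * dist x y)"
    using lipschitz_onD[OF assms(1) \<open>x \<in> U\<close> \<open>y \<in> U\<close>] lipschitz_onD[OF assms(2) \<open>x \<in> U\<close> \<open>y \<in> U\<close>]
      assms(3-5) \<open>x \<in> U\<close> \<open>y \<in> U\<close>
    by (intro add_mono mult_mono) (auto simp: dist_real_def)
  finally show "dist (u x * w x) (u y * w y) \<le> M * (A + B) * dist x y"
    by (simp add: algebra_simps)
next
  show "0 \<le> M * (A + B)"
    using lipschitz_on_nonneg[OF assms(1)] lipschitz_on_nonneg[OF assms(2)] assms(3) by simp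
qed

lemma state_components_le_norm:
  fixes y :: "real \<times> real \<times> real \<times> real"
  shows "\<bar>fst (snd y)\<bar> \<le> norm y" "\<bar>snd (snd (snd y))\<bar> \<le> norm y"
proof -
  have "norm (fst (snd y)) \<le> norm (snd y)" "norm (snd (snd (snd y))) \<le> norm (snd (snd y))"
    "norm (snd (snd y)) \<le> norm (snd y)" "norm (snd y) \<le> norm y"
    using norm_fst_le[of "fst (snd y)" "snd (snd y)"] norm_snd_le[of "snd y" "fst y"]
      norm_snd_le[of "snd (snd y)" "fst (snd y)"] norm_snd_le[of "snd (snd (snd y))" "fst (snd (snd y))"]
    by simp_all
  then show "\<bar>fst (snd y)\<bar> \<le> norm y" "\<bar>snd (snd (snd y))\<bar> \<le> norm y"
    by simp_all
qed

lemma model_rhs_lipschitz: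
  assumes "incidence_ok F1 f1" "incidence_ok F2 f2" "0 < S" "0 < V" "0 < I1" "0 < I2"
  obtains \<rho> L where "\<rho> > 0" "cball (S, V, I1, I2) \<rho> \<subseteq> Rplus4"
    "L-lipschitz_on (cball (S, V, I1, I2) \<rho>) (model_rhs Lam mu r k gamma1 gamma2 v1 v2 F1 F2)"
proof -
  define \<rho> where "\<rho> = min (min S V) (min I1 I2) / 2"
  define U where "U = cball (S, V, I1, I2) \<rho>"
  define R where "R = norm (S, V, I1, I2) + \<rho>"
  have "\<rho> > 0" "\<rho> < S" "\<rho> < V" "\<rho> < I1" "\<rho> < I2"
    using assms(3-6) by (auto simp: \<rho>_def)
  have coord: "1-lipschitz_on U fst" "1-lipschitz_on U (\<lambda>y. fst (snd y))"
    "1-lipschitz_on U (\<lambda>y. fst (snd (snd y)))" "1-lipschitz_on U (\<lambda>y. snd (snd (snd y)))"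
    by (auto intro!: lipschitz_onI order_trans[OF dist_fst_le] order_trans[OF dist_snd_le])
  have proj: "dist (fst y, fst (snd (snd y))) (fst z, fst (snd (snd z))) \<le> dist y z"
    "dist (fst y, snd (snd (snd y))) (fst z, snd (snd (snd z))) \<le> dist y z"
    for y z :: "real \<times> real \<times> real \<times> real"
    by (cases y; cases z; simp add: dist_Pair_Pair)+
  obtain L1 where F1_lip: "L1-lipschitz_on U (\<lambda>y. F1 (fst y) (fst (snd (snd y))))"
    using incidence_lipschitz_comp[where P = "\<lambda>y. (fst y, fst (snd (snd y)))" and e = "(S, V, I1, I2)"
        and s = S and i = I1, OF assms(1) proj(1)] \<open>\<rho> < S\<close> \<open>\<rho> < I1\<close>
    unfolding U_def by auto
  obtain L2 where F2_lip: "L2-lipschitz_on U (\<lambda>y. F2 (fst y) (snd (snd (snd y))))"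
    using incidence_lipschitz_comp[where P = "\<lambda>y. (fst y, snd (snd (snd y)))" and e = "(S, V, I1, I2)"
        and s = S and i = I2, OF assms(2) proj(2)] \<open>\<rho> < S\<close> \<open>\<rho> < I2\<close>
    unfolding U_def by auto
  have prod_lip: "(R * (1 + 1))-lipschitz_on U (\<lambda>y. snd (snd (snd y)) * fst (snd y))"
  proof (rule lipschitz_on_mult[OF coord(4,2)])
    show "\<bar>fst (snd y)\<bar> \<le> R" "\<bar>snd (snd (snd y))\<bar> \<le> R" if "y \<in> U" for y
    proof -
      have "dist y (S, V, I1, I2) \<le> \<rho>"
        using that by (simp add: U_def dist_commute)
      then have "norm y \<le> R"
        using norm_triangle_sub[of y "(S, V, I1, I2)"] by (simp add: R_def dist_norm)
      then show "\<bar>fst (snd y)\<bar> \<le> R" "\<bar>snd (snd (snd y))\<bar> \<le> R"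
        using state_components_le_norm[of y] by simp_all
    qed
  qed (use \<open>\<rho> > 0\<close> in \<open>simp add: R_def\<close>)
  have "\<exists>L. L-lipschitz_on U (model_rhs Lam mu r k gamma1 gamma2 v1 v2 F1 F2)"
    unfolding model_rhs_components
    by (rule exI, (rule lipschitz_on_Pair lipschitz_on_diff lipschitz_on_add lipschitz_on_constant
        lipschitz_on_cmult_real F1_lip F2_lip prod_lip coord)+)
  then show thesis
    using that \<open>\<rho> > 0\<close> cball_subset_Rplus4[OF \<open>\<rho> < S\<close> \<open>\<rho> < V\<close> \<open>\<rho> < I1\<close> \<open>\<rho> < I2\<close>]
    unfolding U_def by blast
qed

lemma endemic_equilibrium_bounds:
  assumes "incidence_ok F1 f1" "incidence_ok F2 f2" "0 < S" "0 < I1" "0 < I2"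
    and "model_rhs Lam mu r k gamma1 gamma2 v1 v2 F1 F2 (S, V, I1, I2) = 0"
  shows "pd2 F1 S I1 \<le> gamma1 + v1 + mu" "pd2 F2 S I2 \<le> gamma2 + v2 + mu - k * V"
    "k * V \<le> gamma2 + v2 + mu"
proof -
  have "I1 * f1 S I1 = I1 * (gamma1 + v1 + mu)" "I2 * f2 S I2 = I2 * (gamma2 + v2 + mu - k * V)"
    using assms(6) incidence_ok_eq[OF assms(1), of S I1] incidence_ok_eq[OF assms(2), of S I2] assms(3-5)
    by (auto simp: model_rhs_def zero_prod_def algebra_simps)
  then have "f1 S I1 = gamma1 + v1 + mu" "f2 S I2 = gamma2 + v2 + mu - k * V"
    using assms(4,5) by simp_all
  then show "pd2 F1 S I1 \<le> gamma1 + v1 + mu" "pd2 F2 S I2 \<le> gamma2 + v2 + mu - k * V"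
    "k * V \<le> gamma2 + v2 + mu"
    using incidence_pd2_le[OF assms(1,3,4)] incidence_pd2_le[OF assms(2,3,5)]
      incidence_ok_nonneg[OF assms(2), of S I2] assms(3,5) by auto
qed

theorem mainTheorem11:
  fixes Lam mu r k gamma1 gamma2 v1 v2 :: real
    and F1 f1 F2 f2 :: "real \<Rightarrow> real \<Rightarrow> real"
    and Ss V1s I1s I2s :: real
  assumes pos: "Lam > 0" "mu > 0" "r > 0" "k > 0" "gamma1 > 0" "gamma2 > 0"
    and nonneg: "v1 \<ge> 0" "v2 \<ge> 0"
    and H1: "incidence_ok F1 f1" and H2: "incidence_ok F2 f2"
    and Epos: "Ss > 0" "V1s > 0" "I1s > 0" "I2s > 0"
    and Eeq: "model_rhs Lam mu r k gamma1 gamma2 v1 v2 F1 F2 (Ss, V1s, I1s, I2s) = 0"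
  defines "lam \<equiv> r + mu"
    and "alpha1 \<equiv> gamma1 + v1 + mu"
    and "alpha2 \<equiv> gamma2 + v2 + mu"
  defines "C11 \<equiv> - pd1 F1 Ss I1s - pd1 F2 Ss I2s - lam"
    and "C13 \<equiv> - pd2 F1 Ss I1s"
    and "C14 \<equiv> - pd2 F2 Ss I2s"
    and "C22 \<equiv> - mu - k * I2s"
    and "C24 \<equiv> - k * V1s"
    and "C31 \<equiv> pd1 F1 Ss I1s"
    and "C33 \<equiv> pd2 F1 Ss I1s - alpha1"
    and "C41 \<equiv> pd1 F2 Ss I2s"
    and "C42 \<equiv> k * I2s"
    and "C44 \<equiv> pd2 F2 Ss I2s + k * V1s - alpha2"
  defines "c1 \<equiv> - C44 - C33 - C22 - C11"
    and "c2 \<equiv> - C41 * C14 - C42 * C24 + C44 * C33 + C44 * C22 + C44 * C11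
              - C31 * C13 + C33 * C22 + C33 * C11 + C22 * C11"
    and "c3 \<equiv> - r * C42 * C14 + C41 * C14 * C33 + C41 * C14 * C22 + C42 * C24 * C33
              + C42 * C24 * C11 + C44 * C31 * C13 - C44 * C33 * C22 - C44 * C33 * C11
              - C44 * C22 * C11 + C31 * C13 * C22 - C33 * C22 * C11"
    and "c4 \<equiv> r * C42 * C14 * C33 - C41 * C14 * C33 * C22 + C42 * C24 * C31 * C13
              - C42 * C24 * C33 * C11 - C44 * C31 * C13 * C22 + C44 * C33 * C22 * C11"
  assumes RH1: "c1 * c2 - c3 > 0"
    and RH2: "c1 * c2 * c3 - c3 ^ 2 - c1 ^ 2 * c4 > 0"
  shows "loc_asym_stable (model_rhs Lam mu r k gamma1 gamma2 v1 v2 F1 F2) Rplus4 (Ss, V1s, I1s, I2s)"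
proof -
  interpret J: jacobian4 C11 C13 C14 C22 C24 C31 C33 C41 C42 C44 r .
  interpret quartic c1 c2 c3 c4 .
  have coeffs: "J.c1 = c1" "J.c2 = c2" "J.c3 = c3" "J.c4 = c4"
    by (simp_all add: J.c1_def J.c2_def J.c3_def J.c4_def c1_def c2_def c3_def c4_def)
  have deriv: "(model_rhs Lam mu r k gamma1 gamma2 v1 v2 F1 F2 has_derivative J.jac) (at (Ss, V1s, I1s, I2s))"
    using model_rhs_has_derivative[OF H1 H2 Epos(1,3,4), of Lam mu r k gamma1 gamma2 v1 v2 V1s]
    by (simp add: C11_def C13_def C14_def C22_def C24_def C31_def C33_def C41_def C42_def C44_def
        lam_def alpha1_def alpha2_def)
  have "C31 > 0" "C41 > 0" "C42 > 0" "C24 < 0" "C11 = - C31 - C41 - r - mu" "C22 = - mu - C42"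
    "C33 \<le> 0" "C13 + C33 < 0" "C44 \<le> 0" "C14 + C44 \<le> 0"
    using incidence_pd1_pos[OF H1 Epos(1,3)] incidence_pd1_pos[OF H2 Epos(1,4)]
      endemic_equilibrium_bounds[OF H1 H2 Epos(1,3,4) Eeq] pos nonneg Epos
    by (simp_all add: C11_def C13_def C14_def C22_def C24_def C31_def C33_def C41_def C42_def
        C44_def lam_def alpha1_def alpha2_def)
  then have "c1 > 0" "c4 > 0"
    using J.char_coeffs_pos[of mu] pos(2,3) unfolding coeffs by blast+
  then have "strict_lyapunov_form (lyapunov_form J.jac) J.jac"
    using J.linear_jac J.jac_annihilated RH1 RH2
    by (intro strict_lyapunov_form_lyapunov_form) (simp_all add: coeffs hurwitz_det2_def hurwitz_det3_def)
  moreover obtain \<rho> L where "\<rho> > 0" "cball (Ss, V1s, I1s, I2s) \<rho> \<subseteq> Rplus4"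
    "L-lipschitz_on (cball (Ss, V1s, I1s, I2s) \<rho>) (model_rhs Lam mu r k gamma1 gamma2 v1 v2 F1 F2)"
    using model_rhs_lipschitz[OF H1 H2 Epos] .
  ultimately show ?thesis
    using Eeq deriv by (intro loc_asym_stable_linearization) auto
qed

end
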